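(* Consider the $k$-agent prophet game with random tie-breaking, and assume $n\ge k$. For every agent $i$, the single threshold strategy $T^k=\frac{1}{2k}\sum_{j=1}^{k}\mathbb{E}[y_j]$ guarantees agent $i$ an expected utility of at least $\frac{1}{2k}\mathbb{E}\big[\sum_{j=1}^{k}y_j\big]$, regardless of the strategies of the other agents.
   Context: Prophet game with competing agents: there are $n$ rewards $v_1,\ldots,v_n$, where $v_t$ is a non-negative real random variable drawn from a known distribution $F_t$ (with finite mean), independently across $t$. There are $k$ agents. At each time $t=1,\ldots,n$, the value $v_t$ is revealed to all agents, and every active agent (an agent who has not yet received a reward) decides whether to select $v_t$. If exactly one agent selects $v_t$, it is assigned to that agent. If several agents select it, it is assigned to one of them by the tie-breaking rule. Under random tie-breaking, the reward goes to a uniformly random agent among those selecting it. An agent who receives a reward becomes inactive, and unselected rewards are lost forever. A strategy of an agent is a (possibly randomized) rule that, for each $t$, decides whether to select $v_t$ based on $t$, the realized value $v_t$, and the set of currently active agents. The utility $u_i(S)$ of agent $i$ under strategy profile $S=(S_i,S_{-i})$ is her expected received reward (zero if she receives none). A strategy $S_i$ guarantees agent $i$ utility $\alpha$ if $u_i(S_i,S_{-i})\ge\alpha$ for every $S_{-i}$. The single threshold strategy $T$ selects $v_t$ if and only if the agent is still active and $v_t\ge T$. For $j=1,\ldots,n$, $y_j$ denotes the $j$-th largest value among $v_1,\ldots,v_n$. *)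

theory Defs
  imports "HOL-Probability.Probability"
begin

text \<open>Times are 0,...,n-1 (paper: 1..n); agents are 0,...,k-1.
  A strategy profile p assigns to agent j, time t, realized value v and set A of
  currently active agents the probability p j t v A in [0,1] with which agent j
  (if active) selects v_t. Randomization is independent across agents and times
  (behavioral strategies). Random tie-breaking: the reward goes to a uniformly
  random selecting agent.\<close>

definition sel_prob :: "(nat \<Rightarrow> nat \<Rightarrow> real \<Rightarrow> nat set \<Rightarrow> real) \<Rightarrow> nat \<Rightarrow> real \<Rightarrow> nat set \<Rightarrow> nat set \<Rightarrow> real" where
  "sel_prob p t v A S = (\<Prod>j\<in>S. p j t v A) * (\<Prod>j\<in>A - S. 1 - p j t v A)"

text \<open>cont_util p F i n m A: expected reward agent i receives during the last m
  time steps (times n-m,...,n-1), given that the set of active agents at time n-m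
  is A.\<close>
primrec cont_util :: "(nat \<Rightarrow> nat \<Rightarrow> real \<Rightarrow> nat set \<Rightarrow> real) \<Rightarrow> (nat \<Rightarrow> real measure)
    \<Rightarrow> nat \<Rightarrow> nat \<Rightarrow> nat \<Rightarrow> nat set \<Rightarrow> real" where
  "cont_util p F i n 0 A = 0"
| "cont_util p F i n (Suc m) A =
     (let t = n - Suc m in
      \<integral>v. (\<Sum>S\<in>Pow A. sel_prob p t v A S *
              (if S = {} then cont_util p F i n m A
               else (1 / real (card S)) *
                    (\<Sum>j\<in>S. (if j = i then v else 0) + cont_util p F i n m (A - {j}))))
        \<partial>F t)"

definition utility :: "(nat \<Rightarrow> nat \<Rightarrow> real \<Rightarrow> nat set \<Rightarrow> real) \<Rightarrow> (nat \<Rightarrow> real measure)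
    \<Rightarrow> nat \<Rightarrow> nat \<Rightarrow> nat \<Rightarrow> real" where
  "utility p F k n i = cont_util p F i n n {0..<k}"

definition valid_strategy :: "(nat \<Rightarrow> real \<Rightarrow> nat set \<Rightarrow> real) \<Rightarrow> bool" where
  "valid_strategy s \<longleftrightarrow> (\<forall>t v A. 0 \<le> s t v A \<and> s t v A \<le> 1)
      \<and> (\<forall>t A. (\<lambda>v. s t v A) \<in> borel_measurable borel)"

text \<open>Single threshold strategy T: select iff v \<ge> T (activity is handled by the game).\<close>
definition threshold_strategy :: "real \<Rightarrow> nat \<Rightarrow> real \<Rightarrow> nat set \<Rightarrow> real" where
  "threshold_strategy T t v A = (if T \<le> v then 1 else 0)"

text \<open>y_j: the j-th largest (j \<ge> 1) among v_0,...,v_{n-1}.\<close>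
definition jth_largest :: "nat \<Rightarrow> (nat \<Rightarrow> real) \<Rightarrow> nat \<Rightarrow> real" where
  "jth_largest n v j = rev (sort (map v [0..<n])) ! (j - 1)"

end

theory Submission
  imports Defs
begin

text \<open>Let T be agent i's threshold and G the sum over the remaining rounds t
  of E[(v_t - T)^+]. By backward induction, an active agent i can expect at least
  min T (G / k) from the remaining rounds, whatever the others do: in a round she
  takes every value v >= T, which she wins with probability at least 1/k as at
  most k agents compete; winning yields v, which is at least the bound of the
  next round plus the excess v - T, and losing keeps her active with the bound of
  the next round. Pointwise, y_1 + ... + y_k <= k T + sum_t (v_t - T)^+, so for
  the threshold T = E[y_1 + ... + y_k] / (2k) we get G / k >= T.\<close>

lemma sum_sel_prob_Pow:
  assumes "finite A"
  shows "(\<Sum>S\<in>Pow A. sel_prob p t v A S) = 1"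
proof -
  have "(\<Sum>S\<in>Pow A. sel_prob p t v A S) = (\<Prod>j\<in>A. p j t v A + (1 - p j t v A))"
    unfolding sel_prob_def by (rule prod_add[OF assms, symmetric])
  then show ?thesis by simp
qed

lemma sel_prob_eq_0_if_certain_select:
  assumes "finite A" "j \<in> A" "j \<notin> S" "p j t v A = 1"
  shows "sel_prob p t v A S = 0"
  unfolding sel_prob_def using assms by (auto simp: prod_zero_iff)

lemma sel_prob_eq_0_if_certain_pass:
  assumes "finite S" "j \<in> S" "p j t v A = 0"
  shows "sel_prob p t v A S = 0"
  unfolding sel_prob_def using assms by (auto simp: prod_zero_iff)

lemma sel_prob_nonneg:
  assumes "\<And>j. j \<in> A \<Longrightarrow> 0 \<le> p j t v A \<and> p j t v A \<le> 1" "S \<subseteq> A"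
  shows "0 \<le> sel_prob p t v A S"
  unfolding sel_prob_def using assms by (intro mult_nonneg_nonneg prod_nonneg) auto

lemma sel_prob_le_1:
  assumes "finite A" "\<And>j. j \<in> A \<Longrightarrow> 0 \<le> p j t v A \<and> p j t v A \<le> 1" "S \<subseteq> A"
  shows "sel_prob p t v A S \<le> 1"
proof -
  have "sel_prob p t v A S \<le> (\<Sum>S\<in>Pow A. sel_prob p t v A S)"
    using assms sel_prob_nonneg[of A p t v] by (intro member_le_sum) auto
  then show ?thesis using sum_sel_prob_Pow[OF assms(1)] by simp
qed

lemma borel_measurable_sel_prob:
  assumes "\<And>j. j \<in> A \<Longrightarrow> (\<lambda>v. p j t v A) \<in> borel_measurable M" "S \<subseteq> A"
  shows "(\<lambda>v. sel_prob p t v A S) \<in> borel_measurable M"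
  unfolding sel_prob_def using assms
  by (intro borel_measurable_times borel_measurable_prod borel_measurable_diff) auto

definition selection_payoff :: "nat \<Rightarrow> real \<Rightarrow> (nat set \<Rightarrow> real) \<Rightarrow> nat set \<Rightarrow> nat set \<Rightarrow> real" where
  "selection_payoff i v C A S =
     (if S = {} then C A
      else 1 / real (card S) * (\<Sum>j\<in>S. (if j = i then v else 0) + C (A - {j})))"

lemma cont_util_Suc_eq:
  "cont_util p F i n (Suc m) A =
     (\<integral>v. (\<Sum>S\<in>Pow A. sel_prob p (n - Suc m) v A S *
             selection_payoff i v (cont_util p F i n m) A S) \<partial>F (n - Suc m))"
  by (simp add: Let_def selection_payoff_def)

lemma cont_util_inactive: "i \<notin> A \<Longrightarrow> cont_util p F i n m A = 0"
proof (induction m arbitrary: A)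
  case (Suc m)
  then have "selection_payoff i v (cont_util p F i n m) A S = 0" if "S \<subseteq> A" for v S
    using that by (auto simp: selection_payoff_def split: if_splits intro!: sum.neutral)
  then show ?case unfolding cont_util_Suc_eq by simp
qed simp

lemma integrable_selection_payoff:
  assumes "prob_space M" "integrable M (\<lambda>v. v)"
  shows "integrable M (\<lambda>v. selection_payoff i v C A S)"
proof -
  interpret prob_space M by fact
  have "integrable M (\<lambda>v. (if j = i then v else 0) + C (A - {j}))" for j
    using assms(2) by (cases "j = i") auto
  then show ?thesis
    unfolding selection_payoff_def by (cases "S = {}") (simp_all add: Bochner_Integration.integrable_sum)
qed

lemma integrable_expected_selection_payoff:
  assumes M: "prob_space M" "integrable M (\<lambda>v. v)" and fin: "finite A"
    and p01: "\<And>j v. j \<in> A \<Longrightarrow> 0 \<le> p j t v A \<and> p j t v A \<le> 1"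
    and meas: "\<And>j. j \<in> A \<Longrightarrow> (\<lambda>v. p j t v A) \<in> borel_measurable M"
  shows "integrable M (\<lambda>v. \<Sum>S\<in>Pow A. sel_prob p t v A S * selection_payoff i v C A S)"
proof (intro Bochner_Integration.integrable_sum)
  fix S assume S: "S \<in> Pow A"
  note payoff = integrable_selection_payoff[OF M, of i C A S]
  show "integrable M (\<lambda>v. sel_prob p t v A S * selection_payoff i v C A S)"
  proof (rule Bochner_Integration.integrable_bound[OF payoff])
    show "(\<lambda>v. sel_prob p t v A S * selection_payoff i v C A S) \<in> borel_measurable M"
      using S meas borel_measurable_integrable[OF payoff]
      by (intro borel_measurable_times borel_measurable_sel_prob) auto
    have "norm (sel_prob p t v A S * selection_payoff i v C A S) \<le> norm (selection_payoff i v C A S)"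
      for v
    proof -
      have "0 \<le> sel_prob p t v A S" "sel_prob p t v A S \<le> 1"
        using S p01 fin by (auto intro: sel_prob_nonneg sel_prob_le_1)
      then show ?thesis by (simp add: abs_mult mult_left_le_one_le)
    qed
    then show "AE v in M. norm (sel_prob p t v A S * selection_payoff i v C A S)
        \<le> norm (selection_payoff i v C A S)"
      by simp
  qed
qed

lemma selection_payoff_ge:
  fixes C :: "nat set \<Rightarrow> real"
  assumes fin: "finite A" and card_A: "card A \<le> k" and S: "S \<subseteq> A"
    and C_i: "C (A - {i}) = 0" and C_A: "M \<le> C A"
    and C_j: "\<And>j. j \<in> A \<Longrightarrow> j \<noteq> i \<Longrightarrow> M \<le> C (A - {j})"
    and M_T: "M \<le> T" and T_v: "i \<in> S \<Longrightarrow> T \<le> v"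
  shows "M + (if i \<in> S then max 0 (v - T) / real k else 0) \<le> selection_payoff i v C A S"
proof -
  have fin_S: "finite S" using S fin finite_subset by blast
  have lower: "real (card (S - {i})) * M \<le> (\<Sum>j\<in>S - {i}. C (A - {j}))"
    using sum_mono[of "S - {i}" "\<lambda>_. M" "\<lambda>j. C (A - {j})"] S C_j by auto
  show ?thesis
  proof (cases "i \<in> S")
    case True
    define s where "s = real (card S)"
    have s: "1 \<le> s" "s \<le> real k"
      using True fin_S card_mono[OF fin S] card_A by (auto simp: s_def Suc_le_eq card_gt_0_iff)
    have "real (card (S - {i})) = s - 1"
      using True fin_S s by (simp add: s_def of_nat_diff)
    moreover have "(\<Sum>j\<in>S. (if j = i then v else 0) + C (A - {j})) = v + (\<Sum>j\<in>S - {i}. C (A - {j}))"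
      using True fin_S C_i by (simp add: sum.remove sum.distrib)
    ultimately have sum_ge: "v + (s - 1) * M \<le> (\<Sum>j\<in>S. (if j = i then v else 0) + C (A - {j}))"
      using lower by simp
    have "M + (v - T) / real k \<le> M + (v - M) / s"
      using s M_T T_v True by (intro add_left_mono frac_le) auto
    also have "\<dots> = (v + (s - 1) * M) / s" using s by (simp add: field_simps)
    also have "\<dots> \<le> (\<Sum>j\<in>S. (if j = i then v else 0) + C (A - {j})) / s"
      using sum_ge s by (intro divide_right_mono) auto
    finally show ?thesis using True T_v by (auto simp: selection_payoff_def s_def)
  next
    case False
    then have "(\<Sum>j\<in>S. (if j = i then v else 0) + C (A - {j})) = (\<Sum>j\<in>S - {i}. C (A - {j}))"
      by (intro sum.cong) auto
    then have "real (card S) * M \<le> (\<Sum>j\<in>S. (if j = i then v else 0) + C (A - {j}))"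
      using lower False by simp
    then show ?thesis
      using False C_A fin_S by (auto simp: selection_payoff_def field_simps card_gt_0_iff)
  qed
qed

lemma expected_selection_payoff_ge:
  fixes C :: "nat set \<Rightarrow> real"
  assumes fin: "finite A" and card_A: "card A \<le> k" and i: "i \<in> A"
    and C_i: "C (A - {i}) = 0" and C_A: "M \<le> C A"
    and C_j: "\<And>j. j \<in> A \<Longrightarrow> j \<noteq> i \<Longrightarrow> M \<le> C (A - {j})"
    and p01: "\<And>j. j \<in> A \<Longrightarrow> 0 \<le> p j t v A \<and> p j t v A \<le> 1"
    and p_i: "p i t v A = (if T \<le> v then 1 else 0)" and M_T: "M \<le> T"
  shows "M + max 0 (v - T) / real k \<le>
    (\<Sum>S\<in>Pow A. sel_prob p t v A S * selection_payoff i v C A S)"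
proof -
  define bonus where "bonus S = (if i \<in> S then max 0 (v - T) / real k else 0)" for S
  have "sel_prob p t v A S * (M + bonus S) = sel_prob p t v A S * (M + max 0 (v - T) / real k)"
    if "S \<subseteq> A" for S
    using sel_prob_eq_0_if_certain_select[OF fin i, of S p t v] p_i
    by (cases "T \<le> v") (auto simp: bonus_def)
  then have "(\<Sum>S\<in>Pow A. sel_prob p t v A S * (M + bonus S))
      = (\<Sum>S\<in>Pow A. sel_prob p t v A S) * (M + max 0 (v - T) / real k)"
    unfolding sum_distrib_right by (intro sum.cong) auto
  then have "M + max 0 (v - T) / real k = (\<Sum>S\<in>Pow A. sel_prob p t v A S * (M + bonus S))"
    by (simp add: sum_sel_prob_Pow[OF fin])
  also have "\<dots> \<le> (\<Sum>S\<in>Pow A. sel_prob p t v A S * selection_payoff i v C A S)"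
  proof (intro sum_mono)
    fix S assume S: "S \<in> Pow A"
    show "sel_prob p t v A S * (M + bonus S) \<le> sel_prob p t v A S * selection_payoff i v C A S"
    proof (cases "sel_prob p t v A S = 0")
      case False
      then have "T \<le> v" if "i \<in> S"
        using sel_prob_eq_0_if_certain_pass[of S i p t v A] that S fin p_i
        by (auto simp: finite_subset split: if_splits)
      then have "M + bonus S \<le> selection_payoff i v C A S"
        unfolding bonus_def using S by (intro selection_payoff_ge[OF fin card_A]) (use assms in auto)
      moreover have "0 \<le> sel_prob p t v A S" using S p01 by (intro sel_prob_nonneg) auto
      ultimately show ?thesis by (rule mult_left_mono)
    qed simp
  qed
  finally show ?thesis .
qed

lemma cont_util_Suc_ge:
  fixes q :: "nat \<Rightarrow> nat \<Rightarrow> real \<Rightarrow> nat set \<Rightarrow> real" and F :: "nat \<Rightarrow> real measure"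
    and n m :: nat
  defines "t \<equiv> n - Suc m"
  assumes "prob_space (F t)" and finite_mean: "integrable (F t) (\<lambda>v. v)"
    and fin_A: "finite A" and card_A: "card A \<le> k" and i: "i \<in> A"
    and q01: "\<And>j v. j \<in> A \<Longrightarrow> 0 \<le> q j t v A \<and> q j t v A \<le> 1"
    and q_meas: "\<And>j. j \<in> A \<Longrightarrow> (\<lambda>v. q j t v A) \<in> borel_measurable (F t)"
    and q_i: "\<And>v. q i t v A = (if T \<le> v then 1 else 0)" and M_T: "M \<le> T"
    and IH: "\<And>A'. A' \<subseteq> A \<Longrightarrow> i \<in> A' \<Longrightarrow> M \<le> cont_util q F i n m A'"
  shows "M + (\<integral>v. max 0 (v - T) \<partial>F t) / real k \<le> cont_util q F i n (Suc m) A"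
proof -
  interpret prob_space "F t" by fact
  have excess_int: "integrable (F t) (\<lambda>v. max 0 (v - T))" using finite_mean by auto
  have "(\<integral>v. M + max 0 (v - T) / real k \<partial>F t)
      = (\<integral>v. M \<partial>F t) + (\<integral>v. max 0 (v - T) / real k \<partial>F t)"
    using excess_int by (intro Bochner_Integration.integral_add) auto
  then have "M + (\<integral>v. max 0 (v - T) \<partial>F t) / real k = (\<integral>v. M + max 0 (v - T) / real k \<partial>F t)"
    by (simp add: prob_space)
  also have "\<dots> \<le> (\<integral>v. (\<Sum>S\<in>Pow A. sel_prob q t v A S *
      selection_payoff i v (cont_util q F i n m) A S) \<partial>F t)"
  proof (rule integral_mono)
    show "integrable (F t) (\<lambda>v. M + max 0 (v - T) / real k)" using excess_int by auto
    show "integrable (F t) (\<lambda>v. \<Sum>S\<in>Pow A. sel_prob q t v A S *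
        selection_payoff i v (cont_util q F i n m) A S)"
      using q01 q_meas by (intro integrable_expected_selection_payoff[OF assms(2) finite_mean fin_A])
    show "M + max 0 (v - T) / real k \<le>
        (\<Sum>S\<in>Pow A. sel_prob q t v A S * selection_payoff i v (cont_util q F i n m) A S)" for v
      using i q01 q_i M_T
      by (intro expected_selection_payoff_ge[OF fin_A card_A]) (auto simp: cont_util_inactive intro!: IH)
  qed
  also have "\<dots> = cont_util q F i n (Suc m) A"
    by (simp only: cont_util_Suc_eq t_def)
  finally show ?thesis .
qed

lemma cont_util_threshold_ge:
  fixes q :: "nat \<Rightarrow> nat \<Rightarrow> real \<Rightarrow> nat set \<Rightarrow> real" and F :: "nat \<Rightarrow> real measure"
  assumes dist: "\<And>t. t < n \<Longrightarrow> prob_space (F t)"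
    and finite_mean: "\<And>t. t < n \<Longrightarrow> integrable (F t) (\<lambda>v. v)"
    and q01: "\<And>j t v A. A \<subseteq> {0..<k} \<Longrightarrow> j \<in> A \<Longrightarrow> 0 \<le> q j t v A \<and> q j t v A \<le> 1"
    and q_meas: "\<And>j t A. t < n \<Longrightarrow> A \<subseteq> {0..<k} \<Longrightarrow> j \<in> A \<Longrightarrow>
        (\<lambda>v. q j t v A) \<in> borel_measurable (F t)"
    and q_i: "\<And>t v A. q i t v A = (if T \<le> v then 1 else 0)"
  shows "m \<le> n \<Longrightarrow> i \<in> A \<Longrightarrow> A \<subseteq> {0..<k} \<Longrightarrow>
    min T ((\<Sum>t\<in>{n-m..<n}. \<integral>v. max 0 (v - T) \<partial>F t) / real k) \<le> cont_util q F i n m A"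
proof (induction m arbitrary: A)
  case (Suc m)
  define g where "g = (\<integral>v. max 0 (v - T) \<partial>F (n - Suc m)) / real k"
  define M where "M = min T ((\<Sum>t\<in>{n-m..<n}. \<integral>v. max 0 (v - T) \<partial>F t) / real k)"
  have t: "n - Suc m < n" using Suc.prems by simp
  have "(\<Sum>t\<in>{n - Suc m..<n}. \<integral>v. max 0 (v - T) \<partial>F t) / real k
      = g + (\<Sum>t\<in>{n-m..<n}. \<integral>v. max 0 (v - T) \<partial>F t) / real k"
    using Suc.prems by (simp add: g_def Suc_diff_Suc sum.atLeast_Suc_lessThan add_divide_distrib)
  moreover have "0 \<le> g" unfolding g_def by (intro divide_nonneg_nonneg integral_nonneg) auto
  ultimately have "min T ((\<Sum>t\<in>{n - Suc m..<n}. \<integral>v. max 0 (v - T) \<partial>F t) / real k) \<le> M + g"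
    by (simp add: M_def min_def)
  also have "\<dots> \<le> cont_util q F i n (Suc m) A"
    unfolding g_def using Suc.prems q01 q_meas[OF t] q_i card_mono[OF _ Suc.prems(3)]
    by (intro cont_util_Suc_ge dist[OF t] finite_mean[OF t])
      (auto simp: M_def finite_subset intro!: Suc.IH)
  finally show ?case .
qed simp

lemma sorted_nth_from_end_ge_iff:
  fixes xs :: "'a :: linorder list"
  assumes sorted: "sorted xs" and j: "1 \<le> j" "j \<le> length xs"
  shows "a \<le> xs ! (length xs - j) \<longleftrightarrow> j \<le> length (filter (\<lambda>x. a \<le> x) xs)"
proof -
  let ?n = "length xs" and ?I = "{i. i < length xs \<and> a \<le> xs ! i}"
  have count: "length (filter (\<lambda>x. a \<le> x) xs) = card ?I"
    by (simp add: length_filter_conv_card)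
  show ?thesis
  proof
    assume "a \<le> xs ! (?n - j)"
    then have "{?n - j..<?n} \<subseteq> ?I"
      by (auto intro: order_trans[OF _ sorted_nth_mono[OF sorted]])
    from card_mono[OF _ this] show "j \<le> length (filter (\<lambda>x. a \<le> x) xs)"
      using j count by simp
  next
    assume "j \<le> length (filter (\<lambda>x. a \<le> x) xs)"
    show "a \<le> xs ! (?n - j)"
    proof (rule ccontr)
      assume "\<not> a \<le> xs ! (?n - j)"
      then have "?I \<subseteq> {Suc (?n - j)..<?n}"
        using sorted j by (auto simp: not_less_eq_eq dest: sorted_nth_mono[of xs _ "?n - j"])
      from card_mono[OF _ this] show False
        using \<open>j \<le> length (filter (\<lambda>x. a \<le> x) xs)\<close> count j by simp
    qed
  qed
qed

lemma jth_largest_eq_sorted_nth: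
  "1 \<le> j \<Longrightarrow> j \<le> n \<Longrightarrow> jth_largest n v j = sort (map v [0..<n]) ! (n - j)"
  unfolding jth_largest_def by (simp add: rev_nth)

lemma jth_largest_ge_iff:
  assumes "1 \<le> j" "j \<le> n"
  shows "a \<le> jth_largest n v j \<longleftrightarrow> j \<le> card {t. t < n \<and> a \<le> v t}"
proof -
  have "length (filter (\<lambda>x. a \<le> x) (sort (map v [0..<n])))
      = length (filter (\<lambda>x. a \<le> x) (map v [0..<n]))"
    by (metis mset_filter mset_sort size_mset)
  also have "\<dots> = card {t. t < n \<and> a \<le> v t}"
    by (auto simp: length_filter_conv_card intro!: arg_cong[where f = card])
  finally have "length (filter (\<lambda>x. a \<le> x) (sort (map v [0..<n]))) = card {t. t < n \<and> a \<le> v t}" .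
  then show ?thesis
    using sorted_nth_from_end_ge_iff[of "sort (map v [0..<n])" j a] assms
    by (simp add: jth_largest_eq_sorted_nth)
qed

lemma jth_largest_mem: "1 \<le> j \<Longrightarrow> j \<le> n \<Longrightarrow> \<exists>t<n. jth_largest n v j = v t"
  using nth_mem[of "n - j" "sort (map v [0..<n])"] by (auto simp: jth_largest_eq_sorted_nth)

lemma sum_jth_largest: "(\<Sum>j=1..n. f (jth_largest n v j)) = (\<Sum>t<n. f (v t))"
proof -
  have "(\<Sum>j=1..n. f (jth_largest n v j)) = sum_list (map f (rev (sort (map v [0..<n]))))"
    by (simp add: jth_largest_def sum_list_sum_nth atLeast0LessThan sum.atLeast1_atMost_eq)
  also have "\<dots> = sum_list (map f (map v [0..<n]))"
    by (simp only: sum_mset_sum_list[symmetric] mset_map mset_rev mset_sort)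
  finally show ?thesis by (simp add: sum_list_sum_nth atLeast0LessThan)
qed

lemma sum_jth_largest_le:
  assumes "k \<le> n"
  shows "(\<Sum>j=1..k. jth_largest n v j) \<le> real k * T + (\<Sum>t<n. max 0 (v t - T))"
proof -
  have "(\<Sum>j=1..k. jth_largest n v j) \<le> (\<Sum>j=1..k. T + max 0 (jth_largest n v j - T))"
    by (intro sum_mono) auto
  also have "\<dots> = real k * T + (\<Sum>j=1..k. max 0 (jth_largest n v j - T))"
    by (simp add: sum.distrib)
  also have "(\<Sum>j=1..k. max 0 (jth_largest n v j - T)) \<le> (\<Sum>j=1..n. max 0 (jth_largest n v j - T))"
    using assms by (intro sum_mono2) auto
  also have "\<dots> = (\<Sum>t<n. max 0 (v t - T))"
    by (rule sum_jth_largest)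
  finally show ?thesis by simp
qed

lemma borel_measurable_jth_largest:
  assumes comp: "\<And>t. t < n \<Longrightarrow> (\<lambda>w. w t) \<in> borel_measurable M" and j: "1 \<le> j" "j \<le> n"
  shows "(\<lambda>w. jth_largest n w j) \<in> borel_measurable M"
  unfolding borel_measurable_iff_ge
proof
  fix a :: real
  define count where "count w = (\<Sum>t<n. if a \<le> w t then 1 else 0 :: real)" for w
  have "count \<in> borel_measurable M"
    unfolding count_def
  proof (intro borel_measurable_sum)
    fix t assume "t \<in> {..<n}"
    with comp have [measurable]: "(\<lambda>w. w t) \<in> borel_measurable M" by simp
    show "(\<lambda>w. if a \<le> w t then 1 else 0 :: real) \<in> borel_measurable M" by measurable
  qed
  moreover have "a \<le> jth_largest n w j \<longleftrightarrow> real j \<le> count w" for w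
  proof -
    have "real (card {t. t < n \<and> a \<le> w t}) = count w"
      by (simp add: count_def sum.If_cases Int_def conj_commute)
    then show ?thesis using jth_largest_ge_iff[OF j] by (metis of_nat_le_iff)
  qed
  ultimately show "{w \<in> space M. a \<le> jth_largest n w j} \<in> sets M"
    by (simp add: borel_measurable_iff_ge)
qed

lemma
  fixes F :: "'i \<Rightarrow> real measure" and f :: "real \<Rightarrow> real"
  assumes "\<And>t. t \<in> I \<Longrightarrow> prob_space (F t)" "t \<in> I" "f \<in> borel_measurable (F t)"
  shows integral_PiM_component: "(\<integral>w. f (w t) \<partial>PiM I F) = (\<integral>x. f x \<partial>F t)"
    and integrable_PiM_component_iff: "integrable (PiM I F) (\<lambda>w. f (w t)) \<longleftrightarrow> integrable (F t) f"
proof -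
  have comp: "(\<lambda>w. w t) \<in> measurable (PiM I F) (F t)"
    using assms(2) by (rule measurable_component_singleton)
  have "distr (PiM I F) (F t) (\<lambda>w. w t) = F t"
    using assms(1,2) by (rule distr_PiM_component)
  then show "(\<integral>w. f (w t) \<partial>PiM I F) = (\<integral>x. f x \<partial>F t)"
    and "integrable (PiM I F) (\<lambda>w. f (w t)) \<longleftrightarrow> integrable (F t) f"
    using integral_distr[OF comp assms(3)] integrable_distr_eq[OF comp assms(3)] by simp_all
qed

context
  fixes F :: "nat \<Rightarrow> real measure" and n :: nat
  assumes dist: "\<And>t. t < n \<Longrightarrow> prob_space (F t)"
    and borel: "\<And>t. t < n \<Longrightarrow> sets (F t) = sets borel"
    and finite_mean: "\<And>t. t < n \<Longrightarrow> integrable (F t) (\<lambda>v. v)"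
begin

lemma borel_measurable_PiM_value:
  assumes "t < n"
  shows "(\<lambda>w. w t) \<in> borel_measurable (PiM {0..<n} F)"
proof -
  have "(\<lambda>w. w t) \<in> PiM {0..<n} F \<rightarrow>\<^sub>M F t"
    using assms by (intro measurable_component_singleton) auto
  then show ?thesis by (simp add: measurable_cong_sets[OF refl borel[OF assms]])
qed

lemma integrable_comp_PiM_value:
  fixes f :: "real \<Rightarrow> real"
  assumes "t < n" "integrable (F t) f"
  shows "integrable (PiM {0..<n} F) (\<lambda>w. f (w t))"
  using integrable_PiM_component_iff[of "{0..<n}" F t f] assms dist borel_measurable_integrable[OF assms(2)]
  by auto

lemma integrable_excess:
  assumes "t < n"
  shows "integrable (F t) (\<lambda>v. max 0 (v - T))"
proof -
  interpret prob_space "F t" using dist[OF assms] .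
  show ?thesis using finite_mean[OF assms] by auto
qed

lemma integrable_jth_largest:
  assumes "1 \<le> j" "j \<le> n"
  shows "integrable (PiM {0..<n} F) (\<lambda>w. jth_largest n w j)"
proof (rule Bochner_Integration.integrable_bound)
  show "integrable (PiM {0..<n} F) (\<lambda>w. \<Sum>t<n. \<bar>w t\<bar>)"
    using finite_mean by (intro Bochner_Integration.integrable_sum integrable_comp_PiM_value) auto
  show "(\<lambda>w. jth_largest n w j) \<in> borel_measurable (PiM {0..<n} F)"
    using assms by (intro borel_measurable_jth_largest borel_measurable_PiM_value)
  have "\<bar>jth_largest n w j\<bar> \<le> (\<Sum>t<n. \<bar>w t\<bar>)" for w
    using jth_largest_mem[OF assms, of w] by (auto intro!: member_le_sum)
  then show "AE w in PiM {0..<n} F. norm (jth_largest n w j) \<le> norm (\<Sum>t<n. \<bar>w t\<bar>)"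
    by (simp add: sum_nonneg)
qed

lemma integral_sum_jth_largest_le:
  assumes "k \<le> n"
  shows "(\<integral>w. (\<Sum>j=1..k. jth_largest n w j) \<partial>PiM {0..<n} F)
    \<le> real k * T + (\<Sum>t<n. \<integral>v. max 0 (v - T) \<partial>F t)"
proof -
  interpret prob_space "PiM {0..<n} F" using dist by (intro prob_space_PiM) auto
  have excess_int: "integrable (PiM {0..<n} F) (\<lambda>w. max 0 (w t - T))" if "t < n" for t
    using that by (intro integrable_comp_PiM_value integrable_excess)
  have "(\<integral>w. (\<Sum>j=1..k. jth_largest n w j) \<partial>PiM {0..<n} F)
      \<le> (\<integral>w. real k * T + (\<Sum>t<n. max 0 (w t - T)) \<partial>PiM {0..<n} F)"
    using assms excess_int
    by (intro integral_mono sum_jth_largest_le Bochner_Integration.integrable_sum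
        integrable_jth_largest Bochner_Integration.integrable_add) auto
  also have "\<dots> = real k * T + (\<Sum>t<n. \<integral>w. max 0 (w t - T) \<partial>PiM {0..<n} F)"
  proof -
    have "integrable (PiM {0..<n} F) (\<lambda>w. \<Sum>t<n. max 0 (w t - T))"
      using excess_int by (intro Bochner_Integration.integrable_sum) auto
    then have "(\<integral>w. real k * T + (\<Sum>t<n. max 0 (w t - T)) \<partial>PiM {0..<n} F)
        = real k * T + (\<integral>w. (\<Sum>t<n. max 0 (w t - T)) \<partial>PiM {0..<n} F)"
      by (subst Bochner_Integration.integral_add) (auto simp: prob_space)
    also have "\<dots> = real k * T + (\<Sum>t<n. \<integral>w. max 0 (w t - T) \<partial>PiM {0..<n} F)"
      using excess_int by (subst Bochner_Integration.integral_sum) auto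
    finally show ?thesis .
  qed
  also have "\<dots> = real k * T + (\<Sum>t<n. \<integral>v. max 0 (v - T) \<partial>F t)"
    using dist integrable_excess
    by (intro arg_cong2[where f = "(+)"] sum.cong refl integral_PiM_component) auto
  finally show ?thesis .
qed

theorem utility_threshold_strategy_ge:
  fixes p :: "nat \<Rightarrow> nat \<Rightarrow> real \<Rightarrow> nat set \<Rightarrow> real"
  assumes i: "i < k" and others: "\<And>j. j < k \<Longrightarrow> j \<noteq> i \<Longrightarrow> valid_strategy (p j)"
  shows "min T ((\<Sum>t<n. \<integral>v. max 0 (v - T) \<partial>F t) / real k)
    \<le> utility (p(i := threshold_strategy T)) F k n i"
proof -
  let ?q = "p(i := threshold_strategy T)"
  have "min T ((\<Sum>t\<in>{n-n..<n}. \<integral>v. max 0 (v - T) \<partial>F t) / real k) \<le> cont_util ?q F i n n {0..<k}"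
  proof (rule cont_util_threshold_ge[OF dist finite_mean])
    show "0 \<le> ?q j t v A \<and> ?q j t v A \<le> 1" if "A \<subseteq> {0..<k}" "j \<in> A" for j t v A
      using others[of j] that by (auto simp: threshold_strategy_def valid_strategy_def)
    show "(\<lambda>v. ?q j t v A) \<in> borel_measurable (F t)"
      if "t < n" "A \<subseteq> {0..<k}" "j \<in> A" for j t A
      using others[of j] that
      by (auto simp: measurable_cong_sets[OF borel[OF \<open>t < n\<close>] refl] valid_strategy_def
          threshold_strategy_def)
  qed (use i in \<open>auto simp: threshold_strategy_def\<close>)
  then show ?thesis by (simp add: utility_def atLeast0LessThan)
qed

end

theorem mainTheorem2:
  fixes F :: "nat \<Rightarrow> real measure" and n k i :: nat
    and p :: "nat \<Rightarrow> nat \<Rightarrow> real \<Rightarrow> nat set \<Rightarrow> real"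
  assumes dist: "\<And>t. t < n \<Longrightarrow> prob_space (F t)"
    and borel: "\<And>t. t < n \<Longrightarrow> sets (F t) = sets borel"
    and nonneg: "\<And>t. t < n \<Longrightarrow> AE v in F t. 0 \<le> v"
    and finite_mean: "\<And>t. t < n \<Longrightarrow> integrable (F t) (\<lambda>v. v)"
    and k_pos: "1 \<le> k" and n_ge_k: "k \<le> n"
    and i_agent: "i < k"
    and others: "\<And>j. j < k \<Longrightarrow> j \<noteq> i \<Longrightarrow> valid_strategy (p j)"
  shows "utility (p(i := threshold_strategy
             ((1 / (2 * real k)) *
              (\<Sum>j=1..k. \<integral>v. jth_largest n v j \<partial>(PiM {0..<n} F))))) F k n i
         \<ge> (1 / (2 * real k)) * (\<integral>v. (\<Sum>j=1..k. jth_largest n v j) \<partial>(PiM {0..<n} F))"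
proof -
  \<comment> \<open>The values need not be nonnegative for this argument.\<close>
  define Y where "Y = (\<integral>v. (\<Sum>j=1..k. jth_largest n v j) \<partial>(PiM {0..<n} F))"
  define T where "T = Y / (2 * real k)"
  have Y: "Y = (\<Sum>j=1..k. \<integral>v. jth_largest n v j \<partial>(PiM {0..<n} F))"
    unfolding Y_def using n_ge_k
    by (intro Bochner_Integration.integral_sum integrable_jth_largest[OF dist borel finite_mean]) auto
  have "2 * real k * T \<le> real k * T + (\<Sum>t<n. \<integral>v. max 0 (v - T) \<partial>F t)"
    using integral_sum_jth_largest_le[OF dist borel finite_mean n_ge_k, where T = T] k_pos
    by (simp add: T_def Y_def)
  then have "T \<le> (\<Sum>t<n. \<integral>v. max 0 (v - T) \<partial>F t) / real k"
    using k_pos by (simp add: field_simps)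
  moreover have "min T ((\<Sum>t<n. \<integral>v. max 0 (v - T) \<partial>F t) / real k)
      \<le> utility (p(i := threshold_strategy T)) F k n i"
    by (rule utility_threshold_strategy_ge) (use assms in auto)
  ultimately have "T \<le> utility (p(i := threshold_strategy T)) F k n i" by simp
  moreover have "(1 / (2 * real k)) * (\<Sum>j=1..k. \<integral>v. jth_largest n v j \<partial>(PiM {0..<n} F)) = T"
    and "(1 / (2 * real k)) * Y = T"
    by (simp_all add: T_def Y)
  ultimately show ?thesis by (simp only: Y_def)
qed

end
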